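(* Let $g\colon\mathbb X\to\mathbb Y$ be continuous and calm in direction $u\in\mathbb S_{\mathbb X}$ at $\bar x\in\mathbb X$, let $D\subset\mathbb Y$ be closed, let $\Phi(x):=g(x)-D$, and assume $(\bar x,0)\in\operatorname{gph}\Phi$. Let $\{e_1,\dots,e_m\}$ be an orthonormal basis of $\mathbb Y$. Suppose there do not exist a direction $v\in\mathbb Y$ and a nonzero $\lambda\in\mathcal N_D(g(\bar x);v)$ with $0\in D^*g(\bar x;(u,v))(\lambda)$ for which there are sequences $\{x_k\}\subset\mathbb X$ with $x_k\ne\bar x$, $\{z_k\}\subset D$, $\{\lambda_k\}\subset\mathbb Y$, $\{\eta_k\}\subset\mathbb X$ such that $x_k\to\bar x$, $z_k\to g(\bar x)$, $\lambda_k\to\lambda$, $\eta_k\to0$, $(x_k-\bar x)/\|x_k-\bar x\|\to u$, $(z_k-g(\bar x))/\|x_k-\bar x\|\to v$, $(g(x_k)-g(\bar x))/\|x_k-\bar x\|\to v$, and for all $k$ and $i\in\{1,\dots,m\}$: $\eta_k\in\widehat D^*g(x_k)(\lambda_k)$, $\lambda_k\in\widehat{\mathcal N}_D(z_k)$, and $\langle\lambda,e_i\rangle\langle g(x_k)-z_k,e_i\rangle>0$ whenever $\langle\lambda,e_i\rangle\ne0$. Then $\Phi$ is quasi-normal in direction $u$ at $(\bar x,0)$ w.r.t. $\{e_1,\dots,e_m\}$. Moreover, if $g$ is calm at every point of a neighbourhood of $\bar x$ (e.g. Lipschitz continuous near $\bar x$), the two conditions are equivalent.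
   Context: $\widehat{\mathcal N}_D$ regular normal cone; $\mathcal N_D(y;v)$ directional limiting normal cone (limits of $\eta_k\in\widehat{\mathcal N}_D(y+t_kv_k)$, $v_k\to v$, $t_k\searrow0$). Regular coderivative $\widehat D^*g(x)(y^* )=\{x^*\mid(x^*,-y^* )\in\widehat{\mathcal N}_{\operatorname{gph}g}(x,g(x))\}$; directional limiting coderivative $D^*g(\bar x;(u,v))(y^* )=\{x^*\mid(x^*,-y^* )\in\mathcal N_{\operatorname{gph}g}((\bar x,g(\bar x));(u,v))\}$; analogously for $\Phi$. $g$ is calm in direction $u$ at $\bar x$ if there are $\varepsilon,\delta,L>0$ with $\|g(x')-g(\bar x)\|\le L\|x'-\bar x\|$ for all $x'\in\bar x+\mathbb B_{\varepsilon,\delta}(u)$, $\mathbb B_{\varepsilon,\delta}(u)=\{v\mid\|\|v\|u-\|u\|v\|\le\delta\|u\|\|v\|,\ \|v\|\le\varepsilon\}$; calm at $x$ means $\|g(x')-g(x)\|\le L\|x'-x\|$ for $x'$ near $x$. Quasi-normality in direction $u$ at $(\bar x,\bar y)$ w.r.t. $\{e_i\}$: there is no nonzero $\lambda$ with $0\in D^*\Phi((\bar x,\bar y);(u,0))(\lambda)$ for which there exist $\{(x_k,y_k)\}\subset\operatorname{gph}\Phi$ with $x_k\ne\bar x$, $\{\lambda_k\}$, $\{\eta_k\}$ with $x_k\to\bar x$, $y_k\to\bar y$, $\lambda_k\to\lambda$, $\eta_k\to0$, $(x_k-\bar x)/\|x_k-\bar x\|\to u$, $(y_k-\bar y)/\|x_k-\bar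 x\|\to0$, $\eta_k\in\widehat D^*\Phi(x_k,y_k)(\lambda_k)$, and $\langle\lambda,e_i\rangle\langle y_k-\bar y,e_i\rangle>0$ whenever $\langle\lambda,e_i\rangle\ne0$. *)

theory Defs
  imports "HOL-Analysis.Analysis"
begin

definition reg_normal_cone :: "'a::euclidean_space set \<Rightarrow> 'a \<Rightarrow> 'a set" where
  "reg_normal_cone D y =
     (if y \<in> D then {eta. \<forall>e>0. \<exists>d>0. \<forall>y'\<in>D. norm (y' - y) < d \<longrightarrow>
                         inner eta (y' - y) \<le> e * norm (y' - y)}
      else {})"

definition dir_normal_cone :: "'a::euclidean_space set \<Rightarrow> 'a \<Rightarrow> 'a \<Rightarrow> 'a set" where
  "dir_normal_cone D y v = {eta. \<exists>t vs etas.
      (\<forall>k. t k > 0) \<and> t \<longlonglongrightarrow> 0 \<and> vs \<longlonglongrightarrow> v \<and> etas \<longlonglongrightarrow> eta \<and>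
      (\<forall>k. etas k \<in> reg_normal_cone D (y + t k *\<^sub>R vs k))}"

definition graph_fun :: "('a \<Rightarrow> 'b) \<Rightarrow> ('a \<times> 'b) set" where
  "graph_fun g = {(x, g x) | x. True}"

definition graph_mult :: "('a \<Rightarrow> 'b set) \<Rightarrow> ('a \<times> 'b) set" where
  "graph_mult Phi = {(x, y). y \<in> Phi x}"

definition reg_coderiv :: "('a::euclidean_space \<Rightarrow> 'b::euclidean_space) \<Rightarrow> 'a \<Rightarrow> 'b \<Rightarrow> 'a set" where
  "reg_coderiv g x ystar = {xstar. (xstar, - ystar) \<in> reg_normal_cone (graph_fun g) (x, g x)}"

definition dir_coderiv :: "('a::euclidean_space \<Rightarrow> 'b::euclidean_space) \<Rightarrow> 'a \<Rightarrow> 'a \<Rightarrow> 'b \<Rightarrow> 'b \<Rightarrow> 'a set" where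
  "dir_coderiv g x u v ystar =
     {xstar. (xstar, - ystar) \<in> dir_normal_cone (graph_fun g) (x, g x) (u, v)}"

definition reg_coderiv_m :: "('a::euclidean_space \<Rightarrow> 'b::euclidean_space set) \<Rightarrow> 'a \<Rightarrow> 'b \<Rightarrow> 'b \<Rightarrow> 'a set" where
  "reg_coderiv_m Phi x y ystar = {xstar. (xstar, - ystar) \<in> reg_normal_cone (graph_mult Phi) (x, y)}"

definition dir_coderiv_m :: "('a::euclidean_space \<Rightarrow> 'b::euclidean_space set) \<Rightarrow> 'a \<Rightarrow> 'b \<Rightarrow> 'a \<Rightarrow> 'b \<Rightarrow> 'b \<Rightarrow> 'a set" where
  "dir_coderiv_m Phi x y u v ystar =
     {xstar. (xstar, - ystar) \<in> dir_normal_cone (graph_mult Phi) (x, y) (u, v)}"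

definition dir_nbhd :: "real \<Rightarrow> real \<Rightarrow> 'a::real_normed_vector \<Rightarrow> 'a set" where
  "dir_nbhd eps delta u = {v. norm (norm v *\<^sub>R u - norm u *\<^sub>R v) \<le> delta * norm u * norm v \<and> norm v \<le> eps}"

definition calm_in_dir :: "('a::real_normed_vector \<Rightarrow> 'b::real_normed_vector) \<Rightarrow> 'a \<Rightarrow> 'a \<Rightarrow> bool" where
  "calm_in_dir g xb u \<longleftrightarrow> (\<exists>eps>0. \<exists>delta>0. \<exists>L>0. \<forall>w\<in>dir_nbhd eps delta u.
       norm (g (xb + w) - g xb) \<le> L * norm w)"

definition calm_at :: "('a::real_normed_vector \<Rightarrow> 'b::real_normed_vector) \<Rightarrow> 'a \<Rightarrow> bool" where
  "calm_at g x \<longleftrightarrow> (\<exists>r>0. \<exists>L>0. \<forall>x'. norm (x' - x) < r \<longrightarrow> norm (g x' - g x) \<le> L * norm (x' - x))"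

definition orthonormal_basis :: "'b::euclidean_space set \<Rightarrow> bool" where
  "orthonormal_basis E \<longleftrightarrow> finite E \<and> (\<forall>e\<in>E. norm e = 1) \<and>
     (\<forall>e\<in>E. \<forall>e'\<in>E. e \<noteq> e' \<longrightarrow> inner e e' = 0) \<and> span E = UNIV"

definition quasi_normal_dir ::
  "('a::euclidean_space \<Rightarrow> 'b::euclidean_space set) \<Rightarrow> 'a \<Rightarrow> 'b \<Rightarrow> 'a \<Rightarrow> 'b set \<Rightarrow> bool" where
  "quasi_normal_dir Phi xb yb u E \<longleftrightarrow>
     \<not> (\<exists>lam. lam \<noteq> 0 \<and> 0 \<in> dir_coderiv_m Phi xb yb u 0 lam \<and>
        (\<exists>x y lams etas.
           (\<forall>k. (x k, y k) \<in> graph_mult Phi \<and> x k \<noteq> xb) \<and>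
           x \<longlonglongrightarrow> xb \<and> y \<longlonglongrightarrow> yb \<and> lams \<longlonglongrightarrow> lam \<and> etas \<longlonglongrightarrow> 0 \<and>
           (\<lambda>k. (1 / norm (x k - xb)) *\<^sub>R (x k - xb)) \<longlonglongrightarrow> u \<and>
           (\<lambda>k. (1 / norm (x k - xb)) *\<^sub>R (y k - yb)) \<longlonglongrightarrow> 0 \<and>
           (\<forall>k. etas k \<in> reg_coderiv_m Phi (x k) (y k) (lams k)) \<and>
           (\<forall>k. \<forall>e\<in>E. inner lam e \<noteq> 0 \<longrightarrow> inner lam e * inner (y k - yb) e > 0)))"

end

theory Submission
  imports Defs
begin

text \<open>The graph of \<open>\<Phi> = g - D\<close> is the image of \<open>gph g \<times> D\<close> under \<open>((a, b), d) \<mapsto> (a, b - d)\<close>.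
  A regular normal \<open>(\<eta>, -\<lambda>)\<close> to \<open>gph \<Phi>\<close> at \<open>(x, g x - z)\<close> therefore always yields a regular
  normal \<open>\<lambda>\<close> to \<open>D\<close> at \<open>z\<close> and \<open>\<eta>\<close> in the regular coderivative of \<open>g\<close> at \<open>x\<close>; conversely these
  combine to a regular normal to \<open>gph \<Phi>\<close> whenever \<open>g\<close> is calm at \<open>x\<close>, since calmness lets nearby
  points of \<open>gph \<Phi>\<close> be lifted to \<open>gph g \<times> D\<close> at comparable distance.
  So the sequences violating quasi-normality of \<open>\<Phi>\<close> and the sequences of the theorem correspond
  via \<open>z\<^sub>k = g x\<^sub>k - y\<^sub>k\<close>; the only missing datum, the direction \<open>v\<close>, is a limit point of the
  difference quotients of \<open>g\<close> along \<open>x\<^sub>k\<close>, which are bounded by calmness of \<open>g\<close> in direction \<open>u\<close>.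
  The limiting normal cone and coderivative conditions are consequences of the sequences themselves.\<close>

lemma mem_reg_normal_cone_iff:
  "eta \<in> reg_normal_cone D y \<longleftrightarrow> y \<in> D \<and>
     (\<forall>e>0. \<exists>d>0. \<forall>y'\<in>D. norm (y' - y) < d \<longrightarrow> inner eta (y' - y) \<le> e * norm (y' - y))"
  by (simp add: reg_normal_cone_def)

lemma reg_normal_cone_pullback:
  assumes eta: "eta \<in> reg_normal_cone G q0" and p0: "p0 \<in> S"
    and into: "\<forall>p\<in>S. h p \<in> G"
    and nonexp: "\<forall>p\<in>S. norm (h p - q0) \<le> norm (p - p0)"
    and inner_eq: "\<forall>p\<in>S. inner zeta (p - p0) = inner eta (h p - q0)"
  shows "zeta \<in> reg_normal_cone S p0"
  unfolding mem_reg_normal_cone_iff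
proof (intro conjI p0 allI impI)
  fix e :: real assume "e > 0"
  with eta obtain d where "d > 0"
    and d: "\<forall>q\<in>G. norm (q - q0) < d \<longrightarrow> inner eta (q - q0) \<le> e * norm (q - q0)"
    unfolding mem_reg_normal_cone_iff by blast
  show "\<exists>d>0. \<forall>p\<in>S. norm (p - p0) < d \<longrightarrow> inner zeta (p - p0) \<le> e * norm (p - p0)"
  proof (intro exI[of _ d] conjI ballI impI)
    fix p assume "p \<in> S" "norm (p - p0) < d"
    then have "inner zeta (p - p0) \<le> e * norm (h p - q0)"
      using d into nonexp inner_eq by fastforce
    also have "\<dots> \<le> e * norm (p - p0)"
      using nonexp \<open>p \<in> S\<close> \<open>e > 0\<close> by (simp add: mult_left_mono)
    finally show "inner zeta (p - p0) \<le> e * norm (p - p0)" .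
  qed (fact \<open>d > 0\<close>)
qed

lemma reg_normal_cone_pushforward:
  assumes zeta: "zeta \<in> reg_normal_cone S p0" and q0: "q0 \<in> G"
    and "r > 0" "C > 0"
    and lift: "\<forall>q\<in>G. norm (q - q0) < r \<longrightarrow>
      (\<exists>p\<in>S. norm (p - p0) \<le> C * norm (q - q0) \<and> inner eta (q - q0) = inner zeta (p - p0))"
  shows "eta \<in> reg_normal_cone G q0"
  unfolding mem_reg_normal_cone_iff
proof (intro conjI q0 allI impI)
  fix e :: real assume "e > 0"
  with zeta \<open>C > 0\<close> obtain d where "d > 0"
    and d: "\<forall>p\<in>S. norm (p - p0) < d \<longrightarrow> inner zeta (p - p0) \<le> e / C * norm (p - p0)"
    unfolding mem_reg_normal_cone_iff by (meson divide_pos_pos)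
  show "\<exists>d>0. \<forall>q\<in>G. norm (q - q0) < d \<longrightarrow> inner eta (q - q0) \<le> e * norm (q - q0)"
  proof (intro exI[of _ "min r (d / C)"] conjI ballI impI)
    show "min r (d / C) > 0"
      using \<open>r > 0\<close> \<open>d > 0\<close> \<open>C > 0\<close> by simp
    fix q assume "q \<in> G" and q: "norm (q - q0) < min r (d / C)"
    with lift obtain p where "p \<in> S" and p: "norm (p - p0) \<le> C * norm (q - q0)"
      and inner_eq: "inner eta (q - q0) = inner zeta (p - p0)"
      by auto
    have "C * norm (q - q0) < d"
      using q \<open>C > 0\<close> by (simp add: pos_less_divide_eq mult.commute)
    then have "norm (p - p0) < d"
      using p by linarith
    then have "inner zeta (p - p0) \<le> e / C * norm (p - p0)"
      using d \<open>p \<in> S\<close> by blast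
    also have "\<dots> \<le> e / C * (C * norm (q - q0))"
      using mult_left_mono[OF p, of "e / C"] \<open>e > 0\<close> \<open>C > 0\<close> by simp
    also have "\<dots> = e * norm (q - q0)"
      using \<open>C > 0\<close> by simp
    finally show "inner eta (q - q0) \<le> e * norm (q - q0)"
      using inner_eq by simp
  qed
qed

lemma reg_normal_cone_Times:
  assumes z1: "z1 \<in> reg_normal_cone S1 p1" and z2: "z2 \<in> reg_normal_cone S2 p2"
  shows "(z1, z2) \<in> reg_normal_cone (S1 \<times> S2) (p1, p2)"
  unfolding mem_reg_normal_cone_iff
proof (intro conjI allI impI)
  show "(p1, p2) \<in> S1 \<times> S2"
    using z1 z2 by (simp add: mem_reg_normal_cone_iff)
  fix e :: real assume "e > 0"
  then have "e / 2 > 0" by simp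
  with z1 obtain d1 where "d1 > 0"
    and d1: "\<forall>s\<in>S1. norm (s - p1) < d1 \<longrightarrow> inner z1 (s - p1) \<le> e / 2 * norm (s - p1)"
    unfolding mem_reg_normal_cone_iff by blast
  from \<open>e / 2 > 0\<close> z2 obtain d2 where "d2 > 0"
    and d2: "\<forall>s\<in>S2. norm (s - p2) < d2 \<longrightarrow> inner z2 (s - p2) \<le> e / 2 * norm (s - p2)"
    unfolding mem_reg_normal_cone_iff by blast
  show "\<exists>d>0. \<forall>s\<in>S1 \<times> S2. norm (s - (p1, p2)) < d \<longrightarrow>
      inner (z1, z2) (s - (p1, p2)) \<le> e * norm (s - (p1, p2))"
  proof (intro exI[of _ "min d1 d2"] conjI ballI impI)
    show "min d1 d2 > 0"
      using \<open>d1 > 0\<close> \<open>d2 > 0\<close> by simp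
    fix s assume "s \<in> S1 \<times> S2" and small: "norm (s - (p1, p2)) < min d1 d2"
    then obtain s1 s2 where s: "s = (s1, s2)" "s1 \<in> S1" "s2 \<in> S2"
      by auto
    let ?n = "norm (s - (p1, p2))"
    have n1: "norm (s1 - p1) \<le> ?n" and n2: "norm (s2 - p2) \<le> ?n"
      using norm_fst_le[of "s1 - p1" "s2 - p2"] norm_snd_le[of "s2 - p2" "s1 - p1"] s by simp_all
    have "inner (z1, z2) (s - (p1, p2)) = inner z1 (s1 - p1) + inner z2 (s2 - p2)"
      using s by simp
    also have "\<dots> \<le> e / 2 * norm (s1 - p1) + e / 2 * norm (s2 - p2)"
      using d1 d2 s n1 n2 small by (intro add_mono) auto
    also have "\<dots> \<le> e / 2 * ?n + e / 2 * ?n"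
      using mult_left_mono[OF n1, of "e / 2"] mult_left_mono[OF n2, of "e / 2"] \<open>e / 2 > 0\<close>
      by linarith
    finally show "inner (z1, z2) (s - (p1, p2)) \<le> e * ?n"
      by simp
  qed
qed

lemma graph_mult_subtract_iff:
  fixes g :: "'a \<Rightarrow> 'b::ab_group_add"
  shows "(x, y) \<in> graph_mult (\<lambda>x. {g x - d | d. d \<in> D}) \<longleftrightarrow> g x - y \<in> D"
  unfolding graph_mult_def by (auto intro!: exI[of _ "g x - y"])

lemma
  fixes g :: "'a::euclidean_space \<Rightarrow> 'b::euclidean_space"
  assumes "eta \<in> reg_coderiv_m (\<lambda>x. {g x - d | d. d \<in> D}) x y lam"
  shows reg_coderiv_m_subtract_imp_reg_normal_cone: "lam \<in> reg_normal_cone D (g x - y)"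
    and reg_coderiv_m_subtract_imp_reg_coderiv: "eta \<in> reg_coderiv g x lam"
proof -
  let ?G = "graph_mult (\<lambda>x. {g x - d | d. d \<in> D})"
  have eta: "(eta, - lam) \<in> reg_normal_cone ?G (x, y)"
    using assms by (simp add: reg_coderiv_m_def)
  then have gxy: "g x - y \<in> D"
    by (simp add: mem_reg_normal_cone_iff graph_mult_subtract_iff)
  show "lam \<in> reg_normal_cone D (g x - y)"
  proof (rule reg_normal_cone_pullback[OF eta gxy, where h = "\<lambda>d. (x, g x - d)"])
    have shift: "(x, g x - d) - (x, y) = (0, - (d - (g x - y)))" for d
      by (simp add: algebra_simps)
    show "\<forall>d\<in>D. norm ((x, g x - d) - (x, y)) \<le> norm (d - (g x - y))"
      unfolding shift by (simp add: norm_minus_commute)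
    show "\<forall>d\<in>D. inner lam (d - (g x - y)) = inner (eta, - lam) ((x, g x - d) - (x, y))"
      unfolding shift by (simp add: inner_diff_right)
  qed (simp add: graph_mult_subtract_iff)
  have shift: "(a, b - (g x - y)) - (x, y) = (a, b) - (x, g x)" for a b
    by (simp add: algebra_simps)
  show "eta \<in> reg_coderiv g x lam"
    unfolding reg_coderiv_def
  proof (rule CollectI, rule reg_normal_cone_pullback[OF eta, where h = "\<lambda>(a, b). (a, b - (g x - y))"])
    show "(x, g x) \<in> graph_fun g"
      by (simp add: graph_fun_def)
  qed (auto simp: graph_fun_def graph_mult_subtract_iff gxy shift)
qed

lemma reg_coderiv_m_subtract_if_calm:
  fixes g :: "'a::euclidean_space \<Rightarrow> 'b::euclidean_space"
  assumes "calm_at g x" and "z \<in> D"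
    and eta: "eta \<in> reg_coderiv g x lam" and lam: "lam \<in> reg_normal_cone D z"
  shows "eta \<in> reg_coderiv_m (\<lambda>x. {g x - d | d. d \<in> D}) x (g x - z) lam"
proof -
  obtain r L where "r > 0" "L > 0"
    and calm: "\<And>a. norm (a - x) < r \<Longrightarrow> norm (g a - g x) \<le> L * norm (a - x)"
    using \<open>calm_at g x\<close> unfolding calm_at_def by blast
  have normal: "((eta, - lam), lam) \<in> reg_normal_cone (graph_fun g \<times> D) ((x, g x), z)"
    using eta lam by (simp add: reg_coderiv_def reg_normal_cone_Times)
  have lift: "\<exists>p\<in>graph_fun g \<times> D. norm (p - ((x, g x), z)) \<le> (2 + 2 * L) * norm (q - (x, g x - z))
      \<and> inner (eta, - lam) (q - (x, g x - z)) = inner ((eta, - lam), lam) (p - ((x, g x), z))"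
    if q: "q \<in> graph_mult (\<lambda>x. {g x - d | d. d \<in> D})" "norm (q - (x, g x - z)) < r" for q
  proof -
    obtain a d where qad: "q = (a, g a - d)" and "d \<in> D"
    proof (cases q)
      case (Pair a b)
      with q(1) show ?thesis
        by (intro that[of a "g a - b"]) (auto simp: graph_mult_subtract_iff)
    qed
    let ?n = "norm (q - (x, g x - z))"
    have na: "norm (a - x) \<le> ?n" and nb: "norm ((g a - d) - (g x - z)) \<le> ?n"
      using norm_fst_le[of "a - x" "(g a - d) - (g x - z)"] norm_snd_le[of "(g a - d) - (g x - z)" "a - x"]
        qad by simp_all
    have ng: "norm (g a - g x) \<le> L * ?n"
      using calm[of a] na q(2) \<open>L > 0\<close> by (meson le_less_trans mult_left_mono order_trans less_imp_le)
    have "d - z = (g a - g x) - ((g a - d) - (g x - z))"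
      by (simp add: algebra_simps)
    then have nd: "norm (d - z) \<le> L * ?n + ?n"
      using norm_triangle_ineq4[of "g a - g x" "(g a - d) - (g x - z)"] ng nb by simp
    have "norm (((a, g a), d) - ((x, g x), z)) \<le> norm (a - x) + norm (g a - g x) + norm (d - z)"
      using norm_Pair_le[of "(a - x, g a - g x)" "d - z"] norm_Pair_le[of "a - x" "g a - g x"] by simp
    also have "\<dots> \<le> (2 + 2 * L) * ?n"
      using na ng nd by (simp add: algebra_simps)
    finally show ?thesis
      using \<open>d \<in> D\<close> qad by (intro bexI[of _ "((a, g a), d)"]) (auto simp: graph_fun_def inner_diff_right)
  qed
  have "(eta, - lam) \<in> reg_normal_cone (graph_mult (\<lambda>x. {g x - d | d. d \<in> D})) (x, g x - z)"
    using \<open>r > 0\<close> \<open>L > 0\<close> lift \<open>z \<in> D\<close>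
    by (intro reg_normal_cone_pushforward[OF normal, where r = r and C = "2 + 2 * L"])
       (auto simp: graph_mult_subtract_iff)
  then show ?thesis
    by (simp add: reg_coderiv_m_def)
qed

lemma dir_normal_cone_sequentialI:
  assumes "\<forall>k. t k > 0" "t \<longlonglongrightarrow> 0" "(\<lambda>k. (1 / t k) *\<^sub>R (y k - y0)) \<longlonglongrightarrow> v"
    and "etas \<longlonglongrightarrow> eta" "\<forall>k. etas k \<in> reg_normal_cone D (y k)"
  shows "eta \<in> dir_normal_cone D y0 v"
  unfolding dir_normal_cone_def
proof (intro CollectI exI conjI)
  have "y0 + t k *\<^sub>R ((1 / t k) *\<^sub>R (y k - y0)) = y k" for k
    using assms(1) by (simp add: less_imp_neq[symmetric])
  then show "\<forall>k. etas k \<in> reg_normal_cone D (y0 + t k *\<^sub>R ((1 / t k) *\<^sub>R (y k - y0)))"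
    using assms(5) by simp
qed (use assms in auto)

definition qn_witness_seqs ::
  "('a::euclidean_space \<Rightarrow> 'b::euclidean_space set) \<Rightarrow> 'a \<Rightarrow> 'b \<Rightarrow> 'a \<Rightarrow> 'b set \<Rightarrow> 'b \<Rightarrow>
    (nat \<Rightarrow> 'a) \<Rightarrow> (nat \<Rightarrow> 'b) \<Rightarrow> (nat \<Rightarrow> 'b) \<Rightarrow> (nat \<Rightarrow> 'a) \<Rightarrow> bool" where
  "qn_witness_seqs Phi xb yb u E lam x y lams etas \<longleftrightarrow>
     (\<forall>k. (x k, y k) \<in> graph_mult Phi \<and> x k \<noteq> xb) \<and>
     x \<longlonglongrightarrow> xb \<and> y \<longlonglongrightarrow> yb \<and> lams \<longlonglongrightarrow> lam \<and> etas \<longlonglongrightarrow> 0 \<and>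
     (\<lambda>k. (1 / norm (x k - xb)) *\<^sub>R (x k - xb)) \<longlonglongrightarrow> u \<and>
     (\<lambda>k. (1 / norm (x k - xb)) *\<^sub>R (y k - yb)) \<longlonglongrightarrow> 0 \<and>
     (\<forall>k. etas k \<in> reg_coderiv_m Phi (x k) (y k) (lams k)) \<and>
     (\<forall>k. \<forall>e\<in>E. inner lam e \<noteq> 0 \<longrightarrow> inner lam e * inner (y k - yb) e > 0)"

definition composite_witness_seqs ::
  "('a::euclidean_space \<Rightarrow> 'b::euclidean_space) \<Rightarrow> 'b set \<Rightarrow> 'a \<Rightarrow> 'a \<Rightarrow> 'b set \<Rightarrow> 'b \<Rightarrow> 'b \<Rightarrow>
    (nat \<Rightarrow> 'a) \<Rightarrow> (nat \<Rightarrow> 'b) \<Rightarrow> (nat \<Rightarrow> 'b) \<Rightarrow> (nat \<Rightarrow> 'a) \<Rightarrow> bool" where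
  "composite_witness_seqs g D xb u E v lam x z lams etas \<longleftrightarrow>
     (\<forall>k. x k \<noteq> xb \<and> z k \<in> D) \<and>
     x \<longlonglongrightarrow> xb \<and> z \<longlonglongrightarrow> g xb \<and> lams \<longlonglongrightarrow> lam \<and> etas \<longlonglongrightarrow> 0 \<and>
     (\<lambda>k. (1 / norm (x k - xb)) *\<^sub>R (x k - xb)) \<longlonglongrightarrow> u \<and>
     (\<lambda>k. (1 / norm (x k - xb)) *\<^sub>R (z k - g xb)) \<longlonglongrightarrow> v \<and>
     (\<lambda>k. (1 / norm (x k - xb)) *\<^sub>R (g (x k) - g xb)) \<longlonglongrightarrow> v \<and>
     (\<forall>k. etas k \<in> reg_coderiv g (x k) (lams k) \<and>
          lams k \<in> reg_normal_cone D (z k) \<and>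
          (\<forall>e\<in>E. inner lam e \<noteq> 0 \<longrightarrow> inner lam e * inner (g (x k) - z k) e > 0))"

lemma norm_diff_tendsto_zero:
  fixes x :: "nat \<Rightarrow> 'a::real_normed_vector"
  shows "x \<longlonglongrightarrow> xb \<Longrightarrow> (\<lambda>k. norm (x k - xb)) \<longlonglongrightarrow> 0"
  using tendsto_norm_zero[OF LIM_zero] .

lemma qn_witness_seqs_imp_dir_coderiv_m:
  assumes "qn_witness_seqs Phi xb yb u E lam x y lams etas"
  shows "0 \<in> dir_coderiv_m Phi xb yb u 0 lam"
  unfolding dir_coderiv_m_def
proof (rule CollectI, rule dir_normal_cone_sequentialI)
  let ?t = "\<lambda>k. norm (x k - xb)"
  have "(\<lambda>k. ((1 / ?t k) *\<^sub>R (x k - xb), (1 / ?t k) *\<^sub>R (y k - yb))) \<longlonglongrightarrow> (u, 0)"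
    using assms unfolding qn_witness_seqs_def by (intro tendsto_Pair) simp_all
  then show "(\<lambda>k. (1 / ?t k) *\<^sub>R ((x k, y k) - (xb, yb))) \<longlonglongrightarrow> (u, 0)"
    by simp
  show "(\<lambda>k. (etas k, - lams k)) \<longlonglongrightarrow> (0, - lam)"
    using assms unfolding qn_witness_seqs_def by (intro tendsto_Pair tendsto_minus) simp_all
qed (use assms in \<open>auto simp: qn_witness_seqs_def reg_coderiv_m_def norm_diff_tendsto_zero\<close>)

lemma
  assumes "composite_witness_seqs g D xb u E v lam x z lams etas"
  shows composite_witness_seqs_imp_dir_normal_cone: "lam \<in> dir_normal_cone D (g xb) v"
    and composite_witness_seqs_imp_dir_coderiv: "0 \<in> dir_coderiv g xb u v lam"
proof -
  let ?t = "\<lambda>k. norm (x k - xb)"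
  show "lam \<in> dir_normal_cone D (g xb) v"
    by (rule dir_normal_cone_sequentialI[where t = ?t])
       (use assms in \<open>auto simp: composite_witness_seqs_def norm_diff_tendsto_zero\<close>)
  show "0 \<in> dir_coderiv g xb u v lam"
    unfolding dir_coderiv_def
  proof (rule CollectI, rule dir_normal_cone_sequentialI[where t = ?t])
    have "(\<lambda>k. ((1 / ?t k) *\<^sub>R (x k - xb), (1 / ?t k) *\<^sub>R (g (x k) - g xb))) \<longlonglongrightarrow> (u, v)"
      using assms unfolding composite_witness_seqs_def by (intro tendsto_Pair) simp_all
    then show "(\<lambda>k. (1 / ?t k) *\<^sub>R ((x k, g (x k)) - (xb, g xb))) \<longlonglongrightarrow> (u, v)"
      by simp
    show "(\<lambda>k. (etas k, - lams k)) \<longlonglongrightarrow> (0, - lam)"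
      using assms unfolding composite_witness_seqs_def by (intro tendsto_Pair tendsto_minus) simp_all
  qed (use assms in \<open>auto simp: composite_witness_seqs_def reg_coderiv_def norm_diff_tendsto_zero\<close>)
qed

lemma ex_composite_witness_seqs_iff:
  "(\<exists>v lam. lam \<noteq> 0 \<and> lam \<in> dir_normal_cone D (g xb) v \<and> 0 \<in> dir_coderiv g xb u v lam \<and>
      (\<exists>x z lams etas. composite_witness_seqs g D xb u E v lam x z lams etas)) \<longleftrightarrow>
   (\<exists>v lam x z lams etas. lam \<noteq> 0 \<and> composite_witness_seqs g D xb u E v lam x z lams etas)"
proof
  assume "\<exists>v lam x z lams etas. lam \<noteq> 0 \<and> composite_witness_seqs g D xb u E v lam x z lams etas"
  then obtain v lam x z lams etas where "lam \<noteq> 0"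
    and c: "composite_witness_seqs g D xb u E v lam x z lams etas"
    by (elim exE conjE)
  show "\<exists>v lam. lam \<noteq> 0 \<and> lam \<in> dir_normal_cone D (g xb) v \<and> 0 \<in> dir_coderiv g xb u v lam \<and>
      (\<exists>x z lams etas. composite_witness_seqs g D xb u E v lam x z lams etas)"
  proof (intro exI conjI)
    show "lam \<noteq> 0"
      by fact
    show "lam \<in> dir_normal_cone D (g xb) v"
      using c by (rule composite_witness_seqs_imp_dir_normal_cone)
    show "0 \<in> dir_coderiv g xb u v lam"
      using c by (rule composite_witness_seqs_imp_dir_coderiv)
  qed (fact c)
qed (elim exE conjE, intro exI conjI; assumption)

lemma quasi_normal_dir_iff_no_witness_seqs:
  "quasi_normal_dir Phi xb yb u E \<longleftrightarrow>
     \<not> (\<exists>lam x y lams etas. lam \<noteq> 0 \<and> qn_witness_seqs Phi xb yb u E lam x y lams etas)"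
  using qn_witness_seqs_imp_dir_coderiv_m
  unfolding quasi_normal_dir_def qn_witness_seqs_def by blast

lemma qn_witness_seqs_subseq:
  assumes "qn_witness_seqs Phi xb yb u E lam x y lams etas" "strict_mono s"
  shows "qn_witness_seqs Phi xb yb u E lam (x \<circ> s) (y \<circ> s) (lams \<circ> s) (etas \<circ> s)"
proof -
  have "(\<lambda>k. (1 / norm ((x \<circ> s) k - xb)) *\<^sub>R ((x \<circ> s) k - xb)) =
          (\<lambda>k. (1 / norm (x k - xb)) *\<^sub>R (x k - xb)) \<circ> s"
    and "(\<lambda>k. (1 / norm ((x \<circ> s) k - xb)) *\<^sub>R ((y \<circ> s) k - yb)) =
          (\<lambda>k. (1 / norm (x k - xb)) *\<^sub>R (y k - yb)) \<circ> s"
    by (simp_all add: o_def)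
  with assms show ?thesis
    unfolding qn_witness_seqs_def by (simp add: LIMSEQ_subseq_LIMSEQ)
qed

lemma composite_witness_seqs_subseq:
  assumes "composite_witness_seqs g D xb u E v lam x z lams etas" "strict_mono s"
  shows "composite_witness_seqs g D xb u E v lam (x \<circ> s) (z \<circ> s) (lams \<circ> s) (etas \<circ> s)"
proof -
  have "(\<lambda>k. (1 / norm ((x \<circ> s) k - xb)) *\<^sub>R ((x \<circ> s) k - xb)) =
          (\<lambda>k. (1 / norm (x k - xb)) *\<^sub>R (x k - xb)) \<circ> s"
    and "(\<lambda>k. (1 / norm ((x \<circ> s) k - xb)) *\<^sub>R ((z \<circ> s) k - g xb)) =
          (\<lambda>k. (1 / norm (x k - xb)) *\<^sub>R (z k - g xb)) \<circ> s"
    and "(\<lambda>k. (1 / norm ((x \<circ> s) k - xb)) *\<^sub>R (g ((x \<circ> s) k) - g xb)) =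
          (\<lambda>k. (1 / norm (x k - xb)) *\<^sub>R (g (x k) - g xb)) \<circ> s"
    by (simp_all add: o_def)
  with assms show ?thesis
    unfolding composite_witness_seqs_def by (simp add: LIMSEQ_subseq_LIMSEQ)
qed

lemma composite_witness_seqs_of_qn_witness_seqs:
  fixes g :: "'a::euclidean_space \<Rightarrow> 'b::euclidean_space"
  assumes "isCont g xb"
    and qn: "qn_witness_seqs (\<lambda>x. {g x - d | d. d \<in> D}) xb 0 u E lam x y lams etas"
    and quot: "(\<lambda>k. (1 / norm (x k - xb)) *\<^sub>R (g (x k) - g xb)) \<longlonglongrightarrow> v"
  shows "composite_witness_seqs g D xb u E v lam x (\<lambda>k. g (x k) - y k) lams etas"
proof -
  have x: "x \<longlonglongrightarrow> xb" and y: "y \<longlonglongrightarrow> 0"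
    and y_quot: "(\<lambda>k. (1 / norm (x k - xb)) *\<^sub>R y k) \<longlonglongrightarrow> 0"
    and graph: "\<And>k. (x k, y k) \<in> graph_mult (\<lambda>x. {g x - d | d. d \<in> D})"
    and coderiv: "\<And>k. etas k \<in> reg_coderiv_m (\<lambda>x. {g x - d | d. d \<in> D}) (x k) (y k) (lams k)"
    using qn by (simp_all add: qn_witness_seqs_def)
  have "(\<lambda>k. g (x k) - y k) \<longlonglongrightarrow> g xb - 0"
    by (intro tendsto_diff isCont_tendsto_compose[OF \<open>isCont g xb\<close> x] y)
  moreover have "(\<lambda>k. (1 / norm (x k - xb)) *\<^sub>R (g (x k) - g xb) - (1 / norm (x k - xb)) *\<^sub>R y k)
      \<longlonglongrightarrow> v - 0"
    by (intro tendsto_diff quot y_quot)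
  then have "(\<lambda>k. (1 / norm (x k - xb)) *\<^sub>R ((g (x k) - y k) - g xb)) \<longlonglongrightarrow> v"
    by (simp add: algebra_simps)
  moreover have "g (x k) - y k \<in> D" for k
    using graph by (simp add: graph_mult_subtract_iff)
  moreover note reg_coderiv_m_subtract_imp_reg_normal_cone[OF coderiv]
    reg_coderiv_m_subtract_imp_reg_coderiv[OF coderiv]
  ultimately show ?thesis
    using qn quot unfolding composite_witness_seqs_def qn_witness_seqs_def by simp
qed

lemma qn_witness_seqs_of_composite_witness_seqs:
  fixes g :: "'a::euclidean_space \<Rightarrow> 'b::euclidean_space"
  assumes "isCont g xb" and calm: "\<forall>k. calm_at g (x k)"
    and c: "composite_witness_seqs g D xb u E v lam x z lams etas"
  shows "qn_witness_seqs (\<lambda>x. {g x - d | d. d \<in> D}) xb 0 u E lam x (\<lambda>k. g (x k) - z k) lams etas"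
proof -
  have x: "x \<longlonglongrightarrow> xb" and z: "z \<longlonglongrightarrow> g xb" and "\<And>k. z k \<in> D"
    and z_quot: "(\<lambda>k. (1 / norm (x k - xb)) *\<^sub>R (z k - g xb)) \<longlonglongrightarrow> v"
    and g_quot: "(\<lambda>k. (1 / norm (x k - xb)) *\<^sub>R (g (x k) - g xb)) \<longlonglongrightarrow> v"
    and "\<And>k. etas k \<in> reg_coderiv g (x k) (lams k)" "\<And>k. lams k \<in> reg_normal_cone D (z k)"
    using c by (simp_all add: composite_witness_seqs_def)
  have "(\<lambda>k. g (x k) - z k) \<longlonglongrightarrow> g xb - g xb"
    by (intro tendsto_diff isCont_tendsto_compose[OF \<open>isCont g xb\<close> x] z)
  moreover have "(\<lambda>k. (1 / norm (x k - xb)) *\<^sub>R (g (x k) - g xb) - (1 / norm (x k - xb)) *\<^sub>R (z k - g xb))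
      \<longlonglongrightarrow> v - v"
    by (intro tendsto_diff g_quot z_quot)
  then have "(\<lambda>k. (1 / norm (x k - xb)) *\<^sub>R ((g (x k) - z k) - 0)) \<longlonglongrightarrow> 0"
    by (simp add: algebra_simps)
  moreover have "(x k, g (x k) - z k) \<in> graph_mult (\<lambda>x. {g x - d | d. d \<in> D})" for k
    using \<open>z k \<in> D\<close> by (simp add: graph_mult_subtract_iff)
  moreover have "etas k \<in> reg_coderiv_m (\<lambda>x. {g x - d | d. d \<in> D}) (x k) (g (x k) - z k) (lams k)" for k
    using calm \<open>z k \<in> D\<close> \<open>etas k \<in> reg_coderiv g (x k) (lams k)\<close> \<open>lams k \<in> reg_normal_cone D (z k)\<close>
    by (simp add: reg_coderiv_m_subtract_if_calm)
  ultimately show ?thesis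
    using c unfolding composite_witness_seqs_def qn_witness_seqs_def by simp
qed

lemma dir_nbhd_memI:
  assumes "norm u = 1" "w \<noteq> 0" "norm w \<le> eps" "dist ((1 / norm w) *\<^sub>R w) u \<le> delta"
  shows "w \<in> dir_nbhd eps delta u"
proof -
  have "norm (norm w *\<^sub>R u - norm u *\<^sub>R w) = norm (norm w *\<^sub>R (u - (1 / norm w) *\<^sub>R w))"
    using assms(1,2) by (simp add: scaleR_diff_right)
  also have "\<dots> = norm w * dist ((1 / norm w) *\<^sub>R w) u"
    by (simp add: dist_norm norm_minus_commute)
  also have "\<dots> \<le> delta * norm u * norm w"
    using mult_left_mono[OF assms(4) norm_ge_zero[of w]] assms(1) by (simp add: mult.commute)
  finally show ?thesis
    using assms(3) by (simp add: dir_nbhd_def)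
qed

lemma calm_in_dir_convergent_difference_quotient:
  fixes g :: "'a::real_normed_vector \<Rightarrow> 'b::euclidean_space"
  assumes "calm_in_dir g xb u" "norm u = 1"
    and x: "x \<longlonglongrightarrow> xb" "\<forall>k. x k \<noteq> xb"
    and dir: "(\<lambda>k. (1 / norm (x k - xb)) *\<^sub>R (x k - xb)) \<longlonglongrightarrow> u"
  shows "\<exists>s v. strict_mono s \<and> ((\<lambda>k. (1 / norm (x k - xb)) *\<^sub>R (g (x k) - g xb)) \<circ> s) \<longlonglongrightarrow> v"
proof -
  obtain eps delta L where "eps > 0" "delta > 0" "L > 0"
    and calm: "\<And>w. w \<in> dir_nbhd eps delta u \<Longrightarrow> norm (g (xb + w) - g xb) \<le> L * norm w"
    using assms(1) unfolding calm_in_dir_def by blast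
  have "eventually (\<lambda>k. norm ((1 / norm (x k - xb)) *\<^sub>R (g (x k) - g xb)) \<le> L) sequentially"
    using tendstoD[OF x(1) \<open>eps > 0\<close>] tendstoD[OF dir \<open>delta > 0\<close>]
  proof eventually_elim
    case (elim k)
    have "x k - xb \<in> dir_nbhd eps delta u"
      using elim x(2) \<open>norm u = 1\<close> by (intro dir_nbhd_memI) (auto simp: dist_norm)
    then have "norm (g (x k) - g xb) \<le> L * norm (x k - xb)"
      using calm by fastforce
    then show ?case
      using x(2) by (simp add: divide_le_eq mult.commute)
  qed
  then have "bounded (range (\<lambda>k. (1 / norm (x k - xb)) *\<^sub>R (g (x k) - g xb)))"
    using \<open>L > 0\<close> by (auto simp: Bseq_eq_bounded[symmetric] Bfun_def)
  then show ?thesis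
    using bounded_imp_convergent_subsequence by blast
qed

lemma not_quasi_normal_dir_imp_composite_witness_seqs:
  fixes g :: "'a::euclidean_space \<Rightarrow> 'b::euclidean_space"
  assumes "isCont g xb" "norm u = 1" "calm_in_dir g xb u"
    and "\<not> quasi_normal_dir (\<lambda>x. {g x - d | d. d \<in> D}) xb 0 u E"
  shows "\<exists>v lam x z lams etas. lam \<noteq> 0 \<and> composite_witness_seqs g D xb u E v lam x z lams etas"
proof -
  obtain lam x y lams etas where "lam \<noteq> 0"
    and qn: "qn_witness_seqs (\<lambda>x. {g x - d | d. d \<in> D}) xb 0 u E lam x y lams etas"
    using assms(4) unfolding quasi_normal_dir_iff_no_witness_seqs not_not by (elim exE conjE)
  from qn have "x \<longlonglongrightarrow> xb" "\<forall>k. x k \<noteq> xb"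
    and "(\<lambda>k. (1 / norm (x k - xb)) *\<^sub>R (x k - xb)) \<longlonglongrightarrow> u"
    by (simp_all add: qn_witness_seqs_def)
  then obtain s v where "strict_mono s"
    and "((\<lambda>k. (1 / norm (x k - xb)) *\<^sub>R (g (x k) - g xb)) \<circ> s) \<longlonglongrightarrow> v"
    using calm_in_dir_convergent_difference_quotient[OF assms(3,2)] by blast
  then have quot: "(\<lambda>k. (1 / norm ((x \<circ> s) k - xb)) *\<^sub>R (g ((x \<circ> s) k) - g xb)) \<longlonglongrightarrow> v"
    by (simp add: o_def)
  have "composite_witness_seqs g D xb u E v lam (x \<circ> s) (\<lambda>k. g ((x \<circ> s) k) - (y \<circ> s) k)
      (lams \<circ> s) (etas \<circ> s)"
    by (rule composite_witness_seqs_of_qn_witness_seqs[OF assms(1)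
          qn_witness_seqs_subseq[OF qn \<open>strict_mono s\<close>] quot])
  with \<open>lam \<noteq> 0\<close> show ?thesis
    by blast
qed

lemma composite_witness_seqs_imp_not_quasi_normal_dir:
  fixes g :: "'a::euclidean_space \<Rightarrow> 'b::euclidean_space"
  assumes "isCont g xb" and calm_near: "\<exists>r>0. \<forall>x. norm (x - xb) < r \<longrightarrow> calm_at g x"
    and "lam \<noteq> 0" and c: "composite_witness_seqs g D xb u E v lam x z lams etas"
  shows "\<not> quasi_normal_dir (\<lambda>x. {g x - d | d. d \<in> D}) xb 0 u E"
proof -
  obtain r where "r > 0" and calm: "\<And>x'. norm (x' - xb) < r \<Longrightarrow> calm_at g x'"
    using calm_near by blast
  from c have "x \<longlonglongrightarrow> xb"
    by (simp add: composite_witness_seqs_def)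
  from tendstoD[OF this \<open>r > 0\<close>] obtain N where N: "\<And>k. k \<ge> N \<Longrightarrow> norm (x k - xb) < r"
    unfolding eventually_sequentially dist_norm by blast
  define s where "s k = k + N" for k
  have "strict_mono s"
    by (simp add: s_def strict_mono_def)
  have "\<forall>k. calm_at g ((x \<circ> s) k)"
    using N calm by (simp add: s_def)
  then have "qn_witness_seqs (\<lambda>x. {g x - d | d. d \<in> D}) xb 0 u E lam (x \<circ> s)
      (\<lambda>k. g ((x \<circ> s) k) - (z \<circ> s) k) (lams \<circ> s) (etas \<circ> s)"
    by (rule qn_witness_seqs_of_composite_witness_seqs[OF assms(1) _
          composite_witness_seqs_subseq[OF c \<open>strict_mono s\<close>]])
  with \<open>lam \<noteq> 0\<close> show ?thesis
    unfolding quasi_normal_dir_iff_no_witness_seqs by blast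
qed

theorem mainTheorem5:
  fixes g :: "'a::euclidean_space \<Rightarrow> 'b::euclidean_space"
    and D :: "'b set" and xb u :: 'a and E :: "'b set"
    and Phi :: "'a \<Rightarrow> 'b set"
  assumes cont: "continuous_on UNIV g"
    and unit: "norm u = 1"
    and calm: "calm_in_dir g xb u"
    and closedD: "closed D"
    and Phi_def: "Phi = (\<lambda>x. {g x - d | d. d \<in> D})"
    and in_gph: "(xb, 0) \<in> graph_mult Phi"
    and onb: "orthonormal_basis E"
  defines "Cond \<equiv> (\<exists>v lam. lam \<noteq> 0 \<and> lam \<in> dir_normal_cone D (g xb) v \<and>
              0 \<in> dir_coderiv g xb u v lam \<and>
              (\<exists>x z lams etas.
                 (\<forall>k. x k \<noteq> xb \<and> z k \<in> D) \<and>
                 x \<longlonglongrightarrow> xb \<and> z \<longlonglongrightarrow> g xb \<and> lams \<longlonglongrightarrow> lam \<and> etas \<longlonglongrightarrow> 0 \<and>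
                 (\<lambda>k. (1 / norm (x k - xb)) *\<^sub>R (x k - xb)) \<longlonglongrightarrow> u \<and>
                 (\<lambda>k. (1 / norm (x k - xb)) *\<^sub>R (z k - g xb)) \<longlonglongrightarrow> v \<and>
                 (\<lambda>k. (1 / norm (x k - xb)) *\<^sub>R (g (x k) - g xb)) \<longlonglongrightarrow> v \<and>
                 (\<forall>k. etas k \<in> reg_coderiv g (x k) (lams k) \<and>
                      lams k \<in> reg_normal_cone D (z k) \<and>
                      (\<forall>e\<in>E. inner lam e \<noteq> 0 \<longrightarrow> inner lam e * inner (g (x k) - z k) e > 0))))"
  shows "(\<not> Cond \<longrightarrow> quasi_normal_dir Phi xb 0 u E) \<and>
         ((\<exists>r>0. \<forall>x. norm (x - xb) < r \<longrightarrow> calm_at g x) \<longrightarrow>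
            (\<not> Cond \<longleftrightarrow> quasi_normal_dir Phi xb 0 u E))"
proof -
  have "isCont g xb"
    using cont by (simp add: continuous_on_eq_continuous_at)
  have Cond_iff: "Cond \<longleftrightarrow>
      (\<exists>v lam x z lams etas. lam \<noteq> 0 \<and> composite_witness_seqs g D xb u E v lam x z lams etas)"
    using ex_composite_witness_seqs_iff[of D g xb u E] unfolding Cond_def composite_witness_seqs_def .
  have sufficient: "\<not> Cond \<longrightarrow> quasi_normal_dir Phi xb 0 u E"
    using not_quasi_normal_dir_imp_composite_witness_seqs[OF \<open>isCont g xb\<close> unit calm]
    unfolding Cond_iff Phi_def by blast
  have necessary: "\<not> quasi_normal_dir Phi xb 0 u E"
    if calm_near: "\<exists>r>0. \<forall>x. norm (x - xb) < r \<longrightarrow> calm_at g x" and Cond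
  proof -
    from \<open>Cond\<close> obtain v lam x z lams etas where "lam \<noteq> 0"
      and "composite_witness_seqs g D xb u E v lam x z lams etas"
      unfolding Cond_iff by (elim exE conjE)
    then show ?thesis
      unfolding Phi_def by (rule composite_witness_seqs_imp_not_quasi_normal_dir[OF \<open>isCont g xb\<close> calm_near])
  qed
  show ?thesis
    using sufficient necessary by (intro conjI impI iffI) blast+
qed

end
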